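(* Every pair of elements of $\mathrm{PSp}(1)$ is strongly doubly reversible.
   Context: $\mathrm{Sp}(1)$ is the group of unit quaternions and $\mathrm{PSp}(1)=\mathrm{Sp}(1)/\{\pm 1\}$. A pair $(g_1,g_2)$ in a group $G$ is strongly doubly reversible if there is $g\in G$ with $g^2=1$ such that $g g_1 g^{-1}=g_1^{-1}$ and $g g_2 g^{-1}=g_2^{-1}$. *)

theory Defs
  imports Complex_Main "HOL-Algebra.Coset"
begin

datatype quat = Quat (qre: real) (qi: real) (qj: real) (qk: real)

definition qmul :: "quat \<Rightarrow> quat \<Rightarrow> quat" where
  "qmul p q = Quat
     (qre p * qre q - qi p * qi q - qj p * qj q - qk p * qk q)
     (qre p * qi q + qi p * qre q + qj p * qk q - qk p * qj q)
     (qre p * qj q - qi p * qk q + qj p * qre q + qk p * qi q)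
     (qre p * qk q + qi p * qj q - qj p * qi q + qk p * qre q)"

definition qnorm2 :: "quat \<Rightarrow> real" where
  "qnorm2 q = (qre q)^2 + (qi q)^2 + (qj q)^2 + (qk q)^2"

definition Sp1 :: "quat monoid" where
  "Sp1 = \<lparr>carrier = {q. qnorm2 q = 1}, mult = qmul, one = Quat 1 0 0 0\<rparr>"

definition PSp1 :: "quat set monoid" where
  "PSp1 = Sp1 Mod {Quat 1 0 0 0, Quat (-1) 0 0 0}"

definition strongly_doubly_reversible :: "('a, 'b) monoid_scheme \<Rightarrow> 'a \<Rightarrow> 'a \<Rightarrow> bool" where
  "strongly_doubly_reversible G g1 g2 \<longleftrightarrow>
     (\<exists>g \<in> carrier G. g \<otimes>\<^bsub>G\<^esub> g = \<one>\<^bsub>G\<^esub>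
        \<and> g \<otimes>\<^bsub>G\<^esub> g1 \<otimes>\<^bsub>G\<^esub> inv\<^bsub>G\<^esub> g = inv\<^bsub>G\<^esub> g1
        \<and> g \<otimes>\<^bsub>G\<^esub> g2 \<otimes>\<^bsub>G\<^esub> inv\<^bsub>G\<^esub> g = inv\<^bsub>G\<^esub> g2)"

end

theory Submission
  imports Defs "HOL-Analysis.Cartesian_Space"
begin

(* Given unit quaternions a and b, pick a unit pure quaternion u orthogonal to the imaginary
   parts of both.  Conjugation by u fixes real parts and negates pure quaternions orthogonal
   to u, so it maps a and b to their conjugates, i.e. to their inverses.  Since u u = -1, the
   class of u in PSp(1) is an involution, and it reverses the classes of a and b. *)

lemma (in group_hom) strongly_doubly_reversible_image:
  assumes g: "g \<in> carrier G" "h (g \<otimes> g) = \<one>\<^bsub>H\<^esub>"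
    and a: "a \<in> carrier G" "g \<otimes> a \<otimes> inv g = inv a"
    and b: "b \<in> carrier G" "g \<otimes> b \<otimes> inv g = inv b"
  shows "strongly_doubly_reversible H (h a) (h b)"
proof -
  have reverses: "h g \<otimes>\<^bsub>H\<^esub> h c \<otimes>\<^bsub>H\<^esub> inv\<^bsub>H\<^esub> h g = inv\<^bsub>H\<^esub> h c"
    if "c \<in> carrier G" "g \<otimes> c \<otimes> inv g = inv c" for c
  proof -
    have "h g \<otimes>\<^bsub>H\<^esub> h c \<otimes>\<^bsub>H\<^esub> inv\<^bsub>H\<^esub> h g = h (g \<otimes> c \<otimes> inv g)"
      using g(1) that(1) by simp
    also have "\<dots> = inv\<^bsub>H\<^esub> h c"
      using that by simp
    finally show ?thesis .
  qed
  have "h g \<otimes>\<^bsub>H\<^esub> h g = \<one>\<^bsub>H\<^esub>"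
    using g by simp
  then show ?thesis
    unfolding strongly_doubly_reversible_def
    using g(1) reverses[OF a] reverses[OF b] by auto
qed

lemma unit_orthogonal_to_two_exists:
  fixes a b :: "'a::euclidean_space"
  assumes "DIM('a) > 2"
  obtains u where "norm u = 1" "u \<bullet> a = 0" "u \<bullet> b = 0"
proof -
  have "dim {a, b} \<le> card {a, b}"
    by (rule dim_le_card) (auto intro: span_base)
  also have "\<dots> < DIM('a)"
    using assms by (simp add: card_insert_if)
  finally obtain v where "v \<noteq> 0" "\<And>y. y \<in> span {a, b} \<Longrightarrow> orthogonal v y"
    using orthogonal_to_subspace_exists by blast
  then show ?thesis
    by (intro that[of "v /\<^sub>R norm v"]) (auto simp: orthogonal_def span_base)
qed

lemma unit_orthogonal_to_two_exists_3:
  fixes a1 a2 a3 b1 b2 b3 :: real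
  obtains x y z where "x\<^sup>2 + y\<^sup>2 + z\<^sup>2 = 1"
    "x * a1 + y * a2 + z * a3 = 0" "x * b1 + y * b2 + z * b3 = 0"
proof -
  obtain u :: "real^3"
    where "norm u = 1" "u \<bullet> vector [a1, a2, a3] = 0" "u \<bullet> vector [b1, b2, b3] = 0"
    by (rule unit_orthogonal_to_two_exists[of "vector [a1, a2, a3] :: real^3" "vector [b1, b2, b3]"])
      auto
  then show ?thesis
    by (intro that[of "u$1" "u$2" "u$3"]) (auto simp: norm_eq_1 inner_vec_def sum_3 power2_eq_square)
qed

definition qconj :: "quat \<Rightarrow> quat" where
  "qconj q = Quat (qre q) (- qi q) (- qj q) (- qk q)"

lemma qmul_assoc: "qmul (qmul p q) r = qmul p (qmul q r)"
  by (simp add: qmul_def algebra_simps)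

lemma qnorm2_qmul: "qnorm2 (qmul p q) = qnorm2 p * qnorm2 q"
  by (simp add: qmul_def qnorm2_def power2_eq_square algebra_simps)

lemma qnorm2_qconj [simp]: "qnorm2 (qconj q) = qnorm2 q"
  by (simp add: qnorm2_def qconj_def)

lemma qmul_qconj_left: "qmul (qconj q) q = Quat (qnorm2 q) 0 0 0"
  by (simp add: qmul_def qconj_def qnorm2_def power2_eq_square algebra_simps)

lemma qmul_pure_self: "qmul (Quat 0 x y z) (Quat 0 x y z) = Quat (- (x\<^sup>2 + y\<^sup>2 + z\<^sup>2)) 0 0 0"
  by (simp add: qmul_def power2_eq_square)

(* For pure u orthogonal to the imaginary part v of q = r + v, u v = - v u, hence
   u q conj(u) = r |u|^2 - v |u|^2. *)
lemma qmul_pure_orthogonal_qconj: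
  assumes "x\<^sup>2 + y\<^sup>2 + z\<^sup>2 = 1" "x * qi q + y * qj q + z * qk q = 0"
  shows "qmul (qmul (Quat 0 x y z) q) (qconj (Quat 0 x y z)) = qconj q"
  using assms unfolding qmul_def qconj_def by simp algebra

lemma group_Sp1: "group Sp1"
proof (rule groupI)
  fix q assume "q \<in> carrier Sp1"
  then show "\<exists>p\<in>carrier Sp1. p \<otimes>\<^bsub>Sp1\<^esub> q = \<one>\<^bsub>Sp1\<^esub>"
    by (intro bexI[of _ "qconj q"]) (auto simp: Sp1_def qmul_qconj_left)
qed (auto simp: Sp1_def qnorm2_qmul qmul_assoc, auto simp: qnorm2_def qmul_def)

lemma inv_Sp1: "q \<in> carrier Sp1 \<Longrightarrow> inv\<^bsub>Sp1\<^esub> q = qconj q"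
  by (rule group.inv_equality[OF group_Sp1])
    (auto simp: Sp1_def qmul_qconj_left)

lemma Sp1_conj_pure_orthogonal:
  assumes "q \<in> carrier Sp1" "x\<^sup>2 + y\<^sup>2 + z\<^sup>2 = 1" "x * qi q + y * qj q + z * qk q = 0"
  shows "Quat 0 x y z \<otimes>\<^bsub>Sp1\<^esub> q \<otimes>\<^bsub>Sp1\<^esub> inv\<^bsub>Sp1\<^esub> Quat 0 x y z = inv\<^bsub>Sp1\<^esub> q"
proof -
  have "Quat 0 x y z \<in> carrier Sp1"
    using assms(2) by (simp add: Sp1_def qnorm2_def)
  then show ?thesis
    using assms(1) qmul_pure_orthogonal_qconj[OF assms(2,3)]
    by (simp add: inv_Sp1) (simp add: Sp1_def)
qed

lemma normal_plus_minus_one: "{Quat 1 0 0 0, Quat (-1) 0 0 0} \<lhd> Sp1"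
proof -
  interpret group Sp1 by (rule group_Sp1)
  let ?N = "{Quat 1 0 0 0, Quat (-1) 0 0 0}"
  have N_sub: "?N \<subseteq> carrier Sp1"
    by (auto simp: Sp1_def qnorm2_def)
  have "subgroup ?N Sp1"
  proof (rule subgroupI[OF N_sub])
    show "inv\<^bsub>Sp1\<^esub> h \<in> ?N" if "h \<in> ?N" for h
      using that N_sub by (auto simp: inv_Sp1 qconj_def)
    show "h \<otimes>\<^bsub>Sp1\<^esub> k \<in> ?N" if "h \<in> ?N" "k \<in> ?N" for h k
      using that by (auto simp: Sp1_def qmul_def)
  qed blast
  then show ?thesis
    by (rule normalI) (auto simp: r_coset_def l_coset_def Sp1_def qmul_def)
qed

theorem theorem3p3:
  assumes "g1 \<in> carrier PSp1" and "g2 \<in> carrier PSp1"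
  shows "strongly_doubly_reversible PSp1 g1 g2"
proof -
  let ?N = "{Quat 1 0 0 0, Quat (-1) 0 0 0}"
  interpret N: normal ?N Sp1 by (rule normal_plus_minus_one)
  interpret proj: group_hom Sp1 PSp1 "(#>\<^bsub>Sp1\<^esub>) ?N"
    unfolding group_hom_def group_hom_axioms_def PSp1_def
    using group_Sp1 N.factorgroup_is_group N.r_coset_hom_Mod by blast
  obtain a b where ab: "a \<in> carrier Sp1" "b \<in> carrier Sp1"
    "g1 = ?N #>\<^bsub>Sp1\<^esub> a" "g2 = ?N #>\<^bsub>Sp1\<^esub> b"
    using assms unfolding PSp1_def carrier_FactGroup by blast
  obtain x y z where u: "x\<^sup>2 + y\<^sup>2 + z\<^sup>2 = 1"
    "x * qi a + y * qj a + z * qk a = 0" "x * qi b + y * qj b + z * qk b = 0"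
    by (rule unit_orthogonal_to_two_exists_3)
  let ?u = "Quat 0 x y z"
  have "?u \<in> carrier Sp1"
    using u(1) by (simp add: Sp1_def qnorm2_def)
  moreover have "?N #>\<^bsub>Sp1\<^esub> (?u \<otimes>\<^bsub>Sp1\<^esub> ?u) = \<one>\<^bsub>PSp1\<^esub>"
    using u(1) N.rcos_const[OF group_Sp1, of "Quat (-1) 0 0 0"]
    by (simp add: Sp1_def qmul_pure_self PSp1_def)
  ultimately show ?thesis
    unfolding ab(3,4) using ab(1,2) u
    by (intro proj.strongly_doubly_reversible_image[of ?u] Sp1_conj_pure_orthogonal)
qed

end
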